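(* Let $t\in[n]$, let $S\subseteq N$ be $t$-switchable, and suppose $a,b$ are connected in $S$ via a path $a_0=a,a_1,\dots,a_k=b$ in $S$. Let $L\subseteq[t]$ and $i,j\in\{0,\dots,k\}$. Then ${\rm s}(L,a_i,a_j)\in S$, and ${\rm s}(L,a_i,a_j)$ is connected to $a$ in $S$.
   Context: Fix positive integers $n, r_1,\dots,r_n$ and let $N=[r_1]\times\cdots\times[r_n]$. For $L\subseteq[n]$ and $a,b\in N$, ${\rm s}(L,a,b)\in N$ has $i$-th component $b_i$ if $i\in L$ and $a_i$ otherwise; ${\rm s}(i,a,b)={\rm s}(\{i\},a,b)$. Let $d(a,b)=\#\{j: a_j\neq b_j\}$. A subset $S\subseteq N$ is $t$-switchable if for all $a,b\in S$ with $d(a,b)=2$ and all $i\in[t]$, ${\rm s}(i,a,b)\in S$. A path in $S$ from $a$ to $b$ is a sequence $a_0=a,\dots,a_k=b$ of elements of $S$ with $a_{j-1}$ and $a_j$ differing in at most one component for all $j$; $a,b$ are connected in $S$ if such a path exists. *)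

theory Defs
  imports Main
begin

text \<open>Elements of N = [r_1] x ... x [r_n] are represented as functions nat => nat,
  with a i in {1..r i} for i in {1..n} and a i = 0 outside {1..n} (extensional convention).\<close>

definition gridN :: "nat \<Rightarrow> (nat \<Rightarrow> nat) \<Rightarrow> (nat \<Rightarrow> nat) set" where
  "gridN n r = {a. (\<forall>i\<in>{1..n}. a i \<in> {1..r i}) \<and> (\<forall>i. i \<notin> {1..n} \<longrightarrow> a i = 0)}"

definition swp :: "nat set \<Rightarrow> (nat \<Rightarrow> nat) \<Rightarrow> (nat \<Rightarrow> nat) \<Rightarrow> (nat \<Rightarrow> nat)" where
  "swp L a b = (\<lambda>i. if i \<in> L then b i else a i)"

definition hdist :: "nat \<Rightarrow> (nat \<Rightarrow> nat) \<Rightarrow> (nat \<Rightarrow> nat) \<Rightarrow> nat" where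
  "hdist n a b = card {j\<in>{1..n}. a j \<noteq> b j}"

definition switchable :: "nat \<Rightarrow> nat \<Rightarrow> (nat \<Rightarrow> nat) set \<Rightarrow> bool" where
  "switchable n t S \<longleftrightarrow>
     (\<forall>a\<in>S. \<forall>b\<in>S. hdist n a b = 2 \<longrightarrow> (\<forall>i\<in>{1..t}. swp {i} a b \<in> S))"

definition is_path :: "nat \<Rightarrow> (nat \<Rightarrow> nat) set \<Rightarrow> (nat \<Rightarrow> (nat \<Rightarrow> nat)) \<Rightarrow> nat
    \<Rightarrow> (nat \<Rightarrow> nat) \<Rightarrow> (nat \<Rightarrow> nat) \<Rightarrow> bool" where
  "is_path n S p k a b \<longleftrightarrow> p 0 = a \<and> p k = b \<and> (\<forall>j\<le>k. p j \<in> S) \<and>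
     (\<forall>j\<in>{1..k}. hdist n (p (j - 1)) (p j) \<le> 1)"

definition connected_in :: "nat \<Rightarrow> (nat \<Rightarrow> nat) set \<Rightarrow> (nat \<Rightarrow> nat) \<Rightarrow> (nat \<Rightarrow> nat) \<Rightarrow> bool" where
  "connected_in n S a b \<longleftrightarrow> (\<exists>p k. is_path n S p k a b)"

end

theory Submission
  imports Defs
begin

text \<open>Fix the endpoint \<open>p j\<close> and call a path vertex \<open>x\<close> good if every switch
  \<open>s(L, x, p j)\<close> with \<open>L \<subseteq> [t]\<close> lies in the component of \<open>a\<close>. The endpoint itself is good,
  and goodness passes along each edge of the path: if \<open>x'\<close> is good and \<open>x\<close> differs from
  \<open>x'\<close> only in component \<open>c\<close>, add the indices of \<open>L\<close> one at a time. To reach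
  \<open>s(L \<union> {l}, x, y)\<close> from \<open>W = s(L, x, y)\<close>, either the switch at \<open>l\<close> changes nothing, or
  \<open>c \<in> L \<union> {l}\<close> and the target equals the good switch \<open>s(L \<union> {l}, x', y)\<close>, or \<open>W\<close> and
  \<open>V = s(L \<union> {l}, x', y)\<close> differ exactly in \<open>c\<close> and \<open>l\<close>, so that switchability yields
  \<open>s(l, W, V)\<close>, which is the target and adjacent to \<open>W\<close>.\<close>

lemma swp_empty [simp]: "swp {} a b = a"
  by (simp add: swp_def)

lemma swp_same [simp]: "swp L a a = a"
  by (simp add: swp_def)

lemma hdist_sym: "hdist n a b = hdist n b a"
  unfolding hdist_def by metis

lemma hdist_le_1_agree:
  assumes "hdist n u v \<le> 1" "c \<in> {1..n}" "u c \<noteq> v c" "j \<in> {1..n}" "j \<noteq> c"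
  shows "u j = v j"
proof -
  let ?D = "{j\<in>{1..n}. u j \<noteq> v j}"
  have "card ?D \<le> Suc 0" using assms(1) by (simp add: hdist_def)
  then have "\<forall>x\<in>?D. \<forall>y\<in>?D. x = y" by (simp add: card_le_Suc0_iff_eq)
  then show ?thesis using assms(2-5) by blast
qed

lemma hdist_swp_insert_le_1: "hdist n (swp L x y) (swp (insert l L) x y) \<le> 1"
proof -
  have "{j\<in>{1..n}. swp L x y j \<noteq> swp (insert l L) x y j} \<subseteq> {l}"
    by (auto simp: swp_def)
  then show ?thesis
    unfolding hdist_def using card_mono[of "{l}"] by fastforce
qed

lemma connected_in_sym:
  assumes "connected_in n S a b"
  shows "connected_in n S b a"
proof -
  obtain p k where p: "is_path n S p k a b"
    using assms by (auto simp: connected_in_def)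
  have "is_path n S (\<lambda>j. p (k - j)) k b a"
    unfolding is_path_def
  proof (intro conjI allI impI ballI)
    fix j assume j: "j \<in> {1..k}"
    then have "Suc (k - j) \<in> {1..k}" by auto
    then have "hdist n (p (k - j)) (p (Suc (k - j))) \<le> 1"
      using p unfolding is_path_def by fastforce
    moreover have "k - (j - 1) = Suc (k - j)" using j by auto
    ultimately show "hdist n (p (k - (j - 1))) (p (k - j)) \<le> 1"
      by (simp add: hdist_sym)
  qed (use p in \<open>auto simp: is_path_def\<close>)
  then show ?thesis by (auto simp: connected_in_def)
qed

lemma connected_in_extend:
  assumes "connected_in n S a u" "v \<in> S" "hdist n u v \<le> 1"
  shows "connected_in n S a v"
proof -
  obtain p k where p: "is_path n S p k a u"
    using assms(1) by (auto simp: connected_in_def)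
  have "is_path n S (p(Suc k := v)) (Suc k) a v"
    using p assms(2,3) by (auto simp: is_path_def le_Suc_eq)
  then show ?thesis by (auto simp: connected_in_def)
qed

lemma is_path_connected_prefix:
  assumes "is_path n S p k a b" "i \<le> k"
  shows "connected_in n S a (p i)"
proof -
  have "is_path n S p i a (p i)" using assms by (auto simp: is_path_def)
  then show ?thesis by (auto simp: connected_in_def)
qed

lemma is_path_adjacent:
  assumes "is_path n S p k a b" "m < k"
  shows "hdist n (p m) (p (Suc m)) \<le> 1"
proof -
  have "Suc m \<in> {1..k}" using assms(2) by auto
  then show ?thesis using assms(1) unfolding is_path_def by fastforce
qed

lemma switchable_swp_insert:
  assumes "switchable n t S" "t \<le> n" "l \<in> {1..t}" "l \<notin> L"
    and "swp L x y \<in> S" "swp (insert l L) x' y \<in> S"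
    and "x l \<noteq> y l" "c \<in> {1..n}" "c \<notin> insert l L" "x c \<noteq> x' c"
    and "\<forall>j\<in>{1..n}. j \<noteq> c \<longrightarrow> x' j = x j"
  shows "swp (insert l L) x y \<in> S"
proof -
  let ?W = "swp L x y" and ?V = "swp (insert l L) x' y"
  have "{j\<in>{1..n}. ?W j \<noteq> ?V j} = {c, l}"
    using assms(2-4,7-11) by (auto simp: swp_def)
  moreover have "c \<noteq> l" using assms(9) by auto
  ultimately have "hdist n ?W ?V = 2" by (simp add: hdist_def)
  then have "swp {l} ?W ?V \<in> S"
    using assms(1,3,5,6) unfolding switchable_def by blast
  moreover have "swp {l} ?W ?V = swp (insert l L) x y"
    by (auto simp: swp_def)
  ultimately show ?thesis by simp
qed

definition switches_reachable ::
    "nat \<Rightarrow> nat \<Rightarrow> (nat \<Rightarrow> nat) set \<Rightarrow> (nat \<Rightarrow> nat) \<Rightarrow> (nat \<Rightarrow> nat) \<Rightarrow> (nat \<Rightarrow> nat) \<Rightarrow> bool" where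
  "switches_reachable n t S a x y \<longleftrightarrow>
     (\<forall>L\<subseteq>{1..t}. swp L x y \<in> S \<and> connected_in n S a (swp L x y))"

lemma switches_reachable_self:
  assumes "y \<in> S" "connected_in n S a y"
  shows "switches_reachable n t S a y y"
  using assms by (simp add: switches_reachable_def)

lemma switches_reachable_step:
  assumes sw: "switchable n t S" and grid: "S \<subseteq> gridN n r" and "t \<le> n"
    and reach': "switches_reachable n t S a x' y"
    and x: "x \<in> S" "connected_in n S a x" and adj: "hdist n x' x \<le> 1"
  shows "switches_reachable n t S a x y"
  unfolding switches_reachable_def
proof (intro allI impI)
  fix L :: "nat set" assume L: "L \<subseteq> {1..t}"
  then have "finite L" using finite_subset by blast
  then show "swp L x y \<in> S \<and> connected_in n S a (swp L x y)"
    using L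
  proof (induction L rule: finite_induct)
    case empty
    then show ?case using x by simp
  next
    case (insert l L)
    let ?T = "swp (insert l L) x y"
    have W: "swp L x y \<in> S" "connected_in n S a (swp L x y)"
      using insert by auto
    have V: "swp (insert l L) x' y \<in> S" "connected_in n S a (swp (insert l L) x' y)"
      using reach' insert.prems by (auto simp: switches_reachable_def)
    consider "x l = y l"
      | "\<forall>c. c \<notin> insert l L \<longrightarrow> x c = x' c"
      | c where "x l \<noteq> y l" "c \<notin> insert l L" "x c \<noteq> x' c"
      by blast
    then show ?case
    proof cases
      case 1
      then have "?T = swp L x y" by (auto simp: swp_def)
      then show ?thesis using W by simp
    next
      case 2
      then have "?T = swp (insert l L) x' y" by (auto simp: swp_def)
      then show ?thesis using V by simp
    next
      case 3
      have "x' \<in> S"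
        using reach' unfolding switches_reachable_def by (metis empty_subsetI swp_empty)
      have c: "c \<in> {1..n}"
      proof (rule ccontr)
        assume "c \<notin> {1..n}"
        then have "x c = 0" "x' c = 0"
          using x(1) \<open>x' \<in> S\<close> grid by (auto simp: gridN_def)
        then show False using 3 by simp
      qed
      have "\<forall>j\<in>{1..n}. j \<noteq> c \<longrightarrow> x' j = x j"
        using hdist_le_1_agree[OF adj c] 3 by auto
      then have "?T \<in> S"
        using switchable_swp_insert[OF sw \<open>t \<le> n\<close> _ insert.hyps(2) W(1) V(1) _ c]
          3 insert.prems by auto
      moreover have "connected_in n S a ?T"
        using connected_in_extend[OF W(2) calculation hdist_swp_insert_le_1] .
      ultimately show ?thesis ..
    qed
  qed
qed

theorem lemma3p5:
  fixes n t k i j :: nat and r :: "nat \<Rightarrow> nat" and S :: "(nat \<Rightarrow> nat) set"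
    and a b :: "nat \<Rightarrow> nat" and p :: "nat \<Rightarrow> (nat \<Rightarrow> nat)" and L :: "nat set"
  assumes "r ` {1..n} \<subseteq> {1..}"
    and "t \<in> {1..n}"
    and "S \<subseteq> gridN n r"
    and "switchable n t S"
    and "is_path n S p k a b"
    and "L \<subseteq> {1..t}"
    and "i \<le> k" and "j \<le> k"
  shows "swp L (p i) (p j) \<in> S \<and> connected_in n S (swp L (p i) (p j)) a"
proof -
  let ?good = "\<lambda>m. switches_reachable n t S a (p m) (p j)"
  have in_S: "p m \<in> S" if "m \<le> k" for m
    using assms(5) that by (simp add: is_path_def)
  have "t \<le> n" using assms(2) by simp
  note step = switches_reachable_step[OF assms(4,3) this]
  note prefix = is_path_connected_prefix[OF assms(5)]
  have up: "?good (Suc m)" if "m < k" "?good m" for m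
    using step[OF that(2) in_S prefix is_path_adjacent[OF assms(5) that(1)]] that(1) by simp
  have down: "?good m" if "m < k" "?good (Suc m)" for m
    using step[OF that(2) in_S prefix, of m] is_path_adjacent[OF assms(5) that(1)] that(1)
    by (simp add: hdist_sym)
  have "?good j"
    using switches_reachable_self in_S prefix assms(8) by blast
  then have "?good i"
  proof (cases "j \<le> i")
    case True
    then show ?thesis using \<open>?good j\<close> assms(7)
      by (induction i rule: dec_induct) (auto intro: up)
  next
    case False
    then have "i \<le> j" by simp
    then show ?thesis using \<open>?good j\<close> assms(8)
      by (induction i rule: inc_induct) (auto intro: down)
  qed
  then show ?thesis
    using assms(6) connected_in_sym by (auto simp: switches_reachable_def)
qed

end
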